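(* For every finite admissible sequence of iterations $(w_0,x_0),\dots,(w_n,x_n)$ in $\mathcal I$ there is a downwards monotonous finite admissible sequence of iterations $(w'_0,x'_0),\dots,(w'_{n'},x'_{n'})$ with $(w'_0,x'_0)=(w_0,x_0)$, $w'_{n'}=w_n$ and $x'_{n'}\le x_n$.
   Context: $\{0,1\}$-matrix $A$, stochastic matrix $\Pi=(\pi_{ij})$ on $\{1,\dots,N\}$; $(k,m)$ is admissible iff $\pi_{km}>0$. $I=[0,1]$; $f_1,\dots,f_N:I\to I$ strictly increasing $C^1$ diffeomorphisms onto their images. $\mathcal I=\{1,\dots,N\}\times I$. A finite admissible sequence of iterations is a sequence $(w_0,x_0),\dots,(w_n,x_n)$ in $\mathcal I$ with $(w_i,w_{i+1})$ admissible and $x_{i+1}=f_{w_i}(x_i)$ for all $i<n$. It is downwards monotonous if for all $m<n$ with $w_m=w_n$ one has $x_m>x_n$. *)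

theory Defs
  imports "HOL-Analysis.Analysis"
begin

definition stochastic :: "nat \<Rightarrow> (nat \<Rightarrow> nat \<Rightarrow> real) \<Rightarrow> bool" where
  "stochastic N \<pi> \<longleftrightarrow>
     (\<forall>i\<in>{1..N}. \<forall>j\<in>{1..N}. 0 \<le> \<pi> i j) \<and>
     (\<forall>i\<in>{1..N}. (\<Sum>j=1..N. \<pi> i j) = 1)"

definition admissible_pair :: "(nat \<Rightarrow> nat \<Rightarrow> real) \<Rightarrow> nat \<Rightarrow> nat \<Rightarrow> bool" where
  "admissible_pair \<pi> k m \<longleftrightarrow> \<pi> k m > 0"

definition incr_C1_diffeo :: "(real \<Rightarrow> real) \<Rightarrow> bool" where
  "incr_C1_diffeo g \<longleftrightarrow>
     g ` {0..1} \<subseteq> {0..1} \<and> strict_mono_on {0..1} g \<and>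
     (\<exists>g'. (\<forall>x\<in>{0..1}. (g has_real_derivative g' x) (at x within {0..1}) \<and> g' x > 0)
           \<and> continuous_on {0..1} g')"

definition admissible_seq ::
  "nat \<Rightarrow> (nat \<Rightarrow> nat \<Rightarrow> real) \<Rightarrow> (nat \<Rightarrow> real \<Rightarrow> real) \<Rightarrow> (nat \<times> real) list \<Rightarrow> bool" where
  "admissible_seq N \<pi> f s \<longleftrightarrow>
     s \<noteq> [] \<and>
     (\<forall>i<length s. fst (s!i) \<in> {1..N} \<and> snd (s!i) \<in> {0..1}) \<and>
     (\<forall>i. Suc i < length s \<longrightarrow>
        admissible_pair \<pi> (fst (s!i)) (fst (s!Suc i)) \<and>
        snd (s!Suc i) = f (fst (s!i)) (snd (s!i)))"

definition downwards_monotonous :: "(nat \<times> real) list \<Rightarrow> bool" where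
  "downwards_monotonous s \<longleftrightarrow>
     (\<forall>m < length s - 1. fst (s!m) = fst (s!(length s - 1)) \<longrightarrow>
        snd (s!m) > snd (s!(length s - 1)))"

end

theory Submission
  imports Defs
begin

(* Admissibility of a sequence of iterations is a local condition
   on consecutive entries, so every nonempty prefix of an admissible sequence
   is admissible again, with the same first entry.  If an admissible sequence
   is not downwards monotonous, some earlier entry (w_m, x_m) has the same
   symbol w_m = w_n as the last one and a point x_m <= x_n; the prefix ending
   at position m is strictly shorter and already meets the required endpoint
   conditions.  Strong induction on the length therefore yields a downwards
   monotonous admissible prefix with the same start, the same final symbol and
   a final point not above the original one. *)

(* Admissibility only constrains consecutive entries, hence passes to
   nonempty prefixes. *)
lemma admissible_seq_take:
  assumes "admissible_seq N \<pi> f s" and "m < length s"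
  shows "admissible_seq N \<pi> f (take (Suc m) s)"
  using assms unfolding admissible_seq_def by (auto simp: nth_take)

lemma not_downwards_monotonous_witness:
  assumes "\<not> downwards_monotonous s" and "s \<noteq> []"
  obtains m where "m < length s - 1"
    and "fst (s ! m) = fst (last s)" and "snd (s ! m) \<le> snd (last s)"
  using assms unfolding downwards_monotonous_def by (auto simp: last_conv_nth not_less)

lemma hd_last_take_Suc:
  assumes "m < length s"
  shows "hd (take (Suc m) s) = hd s" and "last (take (Suc m) s) = s ! m"
proof -
  show "hd (take (Suc m) s) = hd s" using assms by (cases s) auto
  show "last (take (Suc m) s) = s ! m" using assms by (simp add: take_Suc_conv_app_nth)
qed

lemma downwards_monotonous_prefix:
  assumes "admissible_seq N \<pi> f s"
  shows "\<exists>s'. admissible_seq N \<pi> f s' \<and> downwards_monotonous s' \<and>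
              hd s' = hd s \<and> fst (last s') = fst (last s) \<and> snd (last s') \<le> snd (last s)"
  using assms
proof (induction "length s" arbitrary: s rule: less_induct)
  case less
  show ?case
  proof (cases "downwards_monotonous s")
    case True
    with less.prems show ?thesis by blast
  next
    case False
    have "s \<noteq> []" using less.prems unfolding admissible_seq_def by simp
    with False obtain m where m: "m < length s - 1"
      and same_symbol: "fst (s ! m) = fst (last s)"
      and lower_point: "snd (s ! m) \<le> snd (last s)"
      by (rule not_downwards_monotonous_witness)
    let ?t = "take (Suc m) s"
    have m_lt: "m < length s" using m by simp
    have "admissible_seq N \<pi> f ?t" by (rule admissible_seq_take[OF less.prems m_lt])
    moreover have "length ?t < length s" using m by simp
    ultimately obtain s' where s': "admissible_seq N \<pi> f s'" "downwards_monotonous s'"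
      "hd s' = hd ?t" "fst (last s') = fst (last ?t)" "snd (last s') \<le> snd (last ?t)"
      using less.hyps by blast
    then show ?thesis
      using hd_last_take_Suc[OF m_lt] same_symbol lower_point by (intro exI[of _ s']) auto
  qed
qed

theorem mainTheorem8:
  fixes N :: nat and \<pi> :: "nat \<Rightarrow> nat \<Rightarrow> real" and f :: "nat \<Rightarrow> real \<Rightarrow> real"
    and s :: "(nat \<times> real) list"
  assumes "stochastic N \<pi>"
    and "\<forall>i\<in>{1..N}. incr_C1_diffeo (f i)"
    and "admissible_seq N \<pi> f s"
  shows "\<exists>s'. admissible_seq N \<pi> f s' \<and> downwards_monotonous s' \<and>
              hd s' = hd s \<and> fst (last s') = fst (last s) \<and> snd (last s') \<le> snd (last s)"
  using assms(3) by (rule downwards_monotonous_prefix)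

end
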